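(* Let $n\ge2$, let $a=(a_1,\dots,a_n)$ and $b=(b_1,\dots,b_n)$ be real sequences, and let $t=(t_1,\dots,t_n)\in T_a\cap T_b$. Then $$\sum_{i=1}^n a_ib_i-\frac1n\sum_{i=1}^n a_i\sum_{i=1}^n b_i\ge K_n(t)\sum_{i=1}^n\Big(t_i-\frac1n\sum_{j=1}^n t_j\Big)a_i\cdot\sum_{i=1}^n\Big(t_i-\frac1n\sum_{j=1}^n t_j\Big)b_i,$$ where $K_n(t)=\left(\sum_{i=1}^n t_i^2-\frac1n\big(\sum_{i=1}^n t_i\big)^2\right)^{-1}$.
   Context: For a real sequence $(x_i)$, $\Delta x_i=x_{i+1}-x_i$. "Increasing" means strictly increasing. For a real sequence $a=(a_i)_{i=1}^n$, $T_a$ denotes the set of increasing real sequences $(t_i)_{i=1}^n$ such that $(\Delta a_i/\Delta t_i)_{i=1}^{n-1}$ is non-decreasing. *)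

theory Defs
  imports Complex_Main
begin

text \<open>Sequences of length n are modelled as functions nat => real, indexed by 1..n.\<close>

definition fdiff :: "(nat \<Rightarrow> real) \<Rightarrow> nat \<Rightarrow> real" where
  "fdiff x i = x (Suc i) - x i"

definition increasing_seq :: "nat \<Rightarrow> (nat \<Rightarrow> real) \<Rightarrow> bool" where
  "increasing_seq n t \<longleftrightarrow> (\<forall>i j. 1 \<le> i \<longrightarrow> i < j \<longrightarrow> j \<le> n \<longrightarrow> t i < t j)"

definition T_set :: "nat \<Rightarrow> (nat \<Rightarrow> real) \<Rightarrow> (nat \<Rightarrow> real) set" where
  "T_set n a = {t. increasing_seq n t \<and>
     (\<forall>i j. 1 \<le> i \<longrightarrow> i \<le> j \<longrightarrow> j \<le> n - 1 \<longrightarrow>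
        fdiff a i / fdiff t i \<le> fdiff a j / fdiff t j)}"

definition K_n :: "nat \<Rightarrow> (nat \<Rightarrow> real) \<Rightarrow> real" where
  "K_n n t = inverse ((\<Sum>i=1..n. (t i)^2) - (1 / real n) * (\<Sum>i=1..n. t i)^2)"

end

theory Submission
  imports Defs
begin

text \<open>Subtract from \<open>a\<close> its least-squares affine fit in \<open>t\<close>: the residual \<open>x = a - c - \<alpha> t\<close>
  is orthogonal to the constants and to \<open>t\<close>, and the inequality becomes \<open>\<Sum> x b \<ge> 0\<close>.
  Monotone difference quotients make \<open>a\<close>, hence \<open>x\<close>, and \<open>b\<close> convex as functions of \<open>t\<close>.
  A \<open>t\<close>-convex \<open>x\<close> is non-positive between two indices \<open>p < q\<close> and non-negative outside
  them, while \<open>b\<close> minus its chord through \<open>p\<close> and \<open>q\<close> has the same sign pattern. Since \<open>x\<close>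
  annihilates the chord (an affine function of \<open>t\<close>), \<open>\<Sum> x b\<close> is a positive multiple of a
  sum of non-negative terms.\<close>

definition t_convex :: "nat \<Rightarrow> (nat \<Rightarrow> real) \<Rightarrow> (nat \<Rightarrow> real) \<Rightarrow> bool" where
  "t_convex n t x \<longleftrightarrow> (\<forall>i j k. 1 \<le> i \<longrightarrow> i < j \<longrightarrow> j < k \<longrightarrow> k \<le> n \<longrightarrow>
     x j * (t k - t i) \<le> x i * (t k - t j) + x k * (t j - t i))"

lemma sum_fdiff: "i \<le> j \<Longrightarrow> (\<Sum>m=i..<j. fdiff x m) = x j - x i"
  by (simp add: fdiff_def sum_Suc_diff')

lemma increasing_seq_fdiff_pos:
  "increasing_seq n t \<Longrightarrow> 1 \<le> m \<Longrightarrow> m < n \<Longrightarrow> fdiff t m > 0"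
  unfolding increasing_seq_def fdiff_def by auto

lemma T_set_imp_t_convex:
  assumes "t \<in> T_set n a"
  shows "t_convex n t a"
  unfolding t_convex_def
proof (intro allI impI)
  fix i j k assume ijk: "1 \<le> i" "i < j" "j < k" "k \<le> n"
  have inc: "increasing_seq n t"
    and mono: "\<And>l m. 1 \<le> l \<Longrightarrow> l \<le> m \<Longrightarrow> m \<le> n - 1 \<Longrightarrow>
                 fdiff a l / fdiff t l \<le> fdiff a m / fdiff t m"
    using assms unfolding T_set_def by auto
  define s where "s = fdiff a j / fdiff t j"
  have left: "a j - a i \<le> s * (t j - t i)"
  proof -
    have "a j - a i = (\<Sum>m=i..<j. fdiff a m)" using ijk by (simp add: sum_fdiff)
    also have "\<dots> \<le> (\<Sum>m=i..<j. s * fdiff t m)"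
    proof (rule sum_mono)
      fix m assume "m \<in> {i..<j}"
      then have "fdiff a m / fdiff t m \<le> s" "fdiff t m > 0"
        using ijk mono[of m j] increasing_seq_fdiff_pos[OF inc, of m] by (auto simp: s_def)
      then show "fdiff a m \<le> s * fdiff t m" by (simp add: pos_divide_le_eq mult.commute)
    qed
    also have "\<dots> = s * (t j - t i)" using ijk by (simp add: sum_distrib_left[symmetric] sum_fdiff)
    finally show ?thesis .
  qed
  have right: "s * (t k - t j) \<le> a k - a j"
  proof -
    have "s * (t k - t j) = (\<Sum>m=j..<k. s * fdiff t m)"
      using ijk by (simp add: sum_distrib_left[symmetric] sum_fdiff)
    also have "\<dots> \<le> (\<Sum>m=j..<k. fdiff a m)"
    proof (rule sum_mono)
      fix m assume "m \<in> {j..<k}"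
      then have "s \<le> fdiff a m / fdiff t m" "fdiff t m > 0"
        using ijk mono[of j m] increasing_seq_fdiff_pos[OF inc, of m] by (auto simp: s_def)
      then show "s * fdiff t m \<le> fdiff a m" by (simp add: pos_le_divide_eq)
    qed
    also have "\<dots> = a k - a j" using ijk by (simp add: sum_fdiff)
    finally show ?thesis .
  qed
  have "t j - t i > 0" "t k - t j > 0" using inc ijk unfolding increasing_seq_def by auto
  then have "(a j - a i) * (t k - t j) \<le> s * (t j - t i) * (t k - t j)"
    and "s * (t k - t j) * (t j - t i) \<le> (a k - a j) * (t j - t i)"
    using left right by (simp_all add: mult_right_mono)
  then show "a j * (t k - t i) \<le> a i * (t k - t j) + a k * (t j - t i)"
    by (simp add: algebra_simps)
qed

lemma t_convex_diff_affine:
  assumes "t_convex n t x"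
  shows "t_convex n t (\<lambda>i. x i - c - d * t i)"
  unfolding t_convex_def
proof (intro allI impI)
  fix i j k assume "1 \<le> i" "i < j" "j < k" "k \<le> n"
  then have "x j * (t k - t i) \<le> x i * (t k - t j) + x k * (t j - t i)"
    using assms unfolding t_convex_def by blast
  moreover have "(x i - c - d * t i) * (t k - t j) + (x k - c - d * t k) * (t j - t i)
      - (x j - c - d * t j) * (t k - t i)
    = x i * (t k - t j) + x k * (t j - t i) - x j * (t k - t i)"
    by (simp add: algebra_simps)
  ultimately show "(x j - c - d * t j) * (t k - t i)
      \<le> (x i - c - d * t i) * (t k - t j) + (x k - c - d * t k) * (t j - t i)"
    by linarith
qed

lemma t_convex_nonpos_between:
  assumes "t_convex n t x" "increasing_seq n t"
    and "1 \<le> p" "p < i" "i < q" "q \<le> n" "x p \<le> 0" "x q \<le> 0"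
  shows "x i \<le> 0"
proof -
  have "t q - t i > 0" "t i - t p > 0" "t q - t p > 0"
    using assms(2-6) unfolding increasing_seq_def by auto
  moreover have "x i * (t q - t p) \<le> x p * (t q - t i) + x q * (t i - t p)"
    using assms unfolding t_convex_def by auto
  ultimately have "x i * (t q - t p) \<le> 0"
    using assms(7,8) by (smt (verit) mult_nonpos_nonneg)
  with \<open>t q - t p > 0\<close> show ?thesis by (simp add: mult_le_0_iff)
qed

lemma t_convex_sign_pattern:
  assumes "t_convex n t x" "increasing_seq n t" "n \<ge> 2"
  obtains p q where "1 \<le> p" "p < q" "q \<le> n"
    and "\<And>i. i \<in> {1..n} \<Longrightarrow> i < p \<or> q < i \<Longrightarrow> x i \<ge> 0"
    and "\<And>i. p < i \<Longrightarrow> i < q \<Longrightarrow> x i \<le> 0"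
proof -
  define N where "N = {i\<in>{1..n}. x i < 0}"
  have outside: "x i \<ge> 0" if "N \<subseteq> {p..q}" "i \<in> {1..n}" "i < p \<or> q < i" for i p q
    using that unfolding N_def by force
  show thesis
  proof (cases "N = {}")
    case True
    show thesis
      by (rule that[of 1 2]) (use assms(3) outside[of 1 2] True in auto)
  next
    case False
    define p where "p = Min N"
    define q where "q = Max N"
    have "finite N" by (simp add: N_def)
    with False have "p \<in> N" "q \<in> N" and N: "N \<subseteq> {p..q}"
      unfolding p_def q_def by auto
    then have pq: "1 \<le> p" "p \<le> q" "q \<le> n" "x p < 0" "x q < 0" unfolding N_def by auto
    show thesis
    proof (cases "p < q")
      case True
      show thesis
      proof (rule that[of p q])
        fix i assume "p < i" "i < q"
        then show "x i \<le> 0"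
          using t_convex_nonpos_between[OF assms(1,2)] pq by (meson less_imp_le)
      qed (use pq True outside[OF N] in auto)
    next
      case False
      with N pq have N_succ: "N \<subseteq> {p..Suc p}" and N_pred: "N \<subseteq> {p - 1..p}" by auto
      show thesis
      proof (cases "p < n")
        case True
        show thesis
          by (rule that[of p "Suc p"]) (use True pq outside[OF N_succ] in auto)
      next
        case False
        show thesis
          by (rule that[of "p - 1" p]) (use False pq assms(3) outside[OF N_pred] in auto)
      qed
    qed
  qed
qed

lemma t_convex_chord_product_nonneg:
  assumes "t_convex n t y" "1 \<le> p" "p < q" "q \<le> n" "i \<in> {1..n}"
    and "i < p \<or> q < i \<Longrightarrow> x i \<ge> 0" and "p < i \<Longrightarrow> i < q \<Longrightarrow> x i \<le> 0"
  shows "0 \<le> x i * (y i * (t q - t p) - y p * (t q - t i) - y q * (t i - t p))"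
    (is "0 \<le> x i * ?E")
proof -
  have convex: "y j' * (t k - t i') \<le> y i' * (t k - t j') + y k * (t j' - t i')"
    if "1 \<le> i'" "i' < j'" "j' < k" "k \<le> n" for i' j' k
    using assms(1) that unfolding t_convex_def by blast
  consider "i < p" | "i = p" | "p < i" "i < q" | "i = q" | "q < i" by linarith
  then show ?thesis
  proof cases
    case 1
    with convex[of i p q] assms(3-5) have "?E \<ge> 0" by (auto simp: algebra_simps)
    with 1 assms(6) show ?thesis by simp
  next
    case 3
    with convex[of p i q] assms(2,4) have "?E \<le> 0" by (auto simp: algebra_simps)
    with 3 assms(7) show ?thesis by (simp add: mult_nonpos_nonpos)
  next
    case 5
    with convex[of p q i] assms(2,3,5) have "?E \<ge> 0" by (auto simp: algebra_simps)
    with 5 assms(6) show ?thesis by simp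
  qed (simp_all add: algebra_simps)
qed

lemma t_convex_orthogonal_sum_mult_nonneg:
  assumes "n \<ge> 2" "increasing_seq n t" "t_convex n t x" "t_convex n t y"
    and sum_x: "(\<Sum>i=1..n. x i) = 0" and sum_xt: "(\<Sum>i=1..n. x i * t i) = 0"
  shows "(\<Sum>i=1..n. x i * y i) \<ge> 0"
proof -
  obtain p q where pq: "1 \<le> p" "p < q" "q \<le> n"
    and out: "\<And>i. i \<in> {1..n} \<Longrightarrow> i < p \<or> q < i \<Longrightarrow> x i \<ge> 0"
    and inn: "\<And>i. p < i \<Longrightarrow> i < q \<Longrightarrow> x i \<le> 0"
    using t_convex_sign_pattern[OF assms(3,2,1)] by blast
  define E where "E i = y i * (t q - t p) - y p * (t q - t i) - y q * (t i - t p)" for i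
  have "t q - t p > 0" using assms(2) pq unfolding increasing_seq_def by auto
  have "(\<Sum>i=1..n. x i * E i) = (t q - t p) * (\<Sum>i=1..n. x i * y i)
      - (y q - y p) * (\<Sum>i=1..n. x i * t i) - (y p * t q - y q * t p) * (\<Sum>i=1..n. x i)"
    by (simp add: E_def algebra_simps sum_distrib_left sum_subtractf sum.distrib)
  also have "\<dots> = (t q - t p) * (\<Sum>i=1..n. x i * y i)" using sum_x sum_xt by simp
  finally have "(\<Sum>i=1..n. x i * E i) = (t q - t p) * (\<Sum>i=1..n. x i * y i)" .
  moreover have "(\<Sum>i=1..n. x i * E i) \<ge> 0"
    unfolding E_def by (rule sum_nonneg, rule t_convex_chord_product_nonneg[OF assms(4) pq _ out inn])
  ultimately show ?thesis using \<open>t q - t p > 0\<close> by (simp add: zero_le_mult_iff)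
qed

lemma sum_centered_mult:
  "(\<Sum>i\<in>A. (f i - sum f A / card A) * g i) = (\<Sum>i\<in>A. f i * g i) - sum f A * sum g A / card A"
  by (simp add: left_diff_distrib sum_subtractf sum_distrib_left[symmetric] sum_divide_distrib[symmetric])

lemma sum_centered: "finite A \<Longrightarrow> (\<Sum>i\<in>A. f i - sum f A / card A) = 0"
  by (cases "A = {}") (simp_all add: sum_subtractf)

definition cov :: "nat \<Rightarrow> (nat \<Rightarrow> real) \<Rightarrow> (nat \<Rightarrow> real) \<Rightarrow> real" where
  "cov n f g = (\<Sum>i=1..n. f i * g i) - (\<Sum>i=1..n. f i) * (\<Sum>i=1..n. g i) / n"

lemma cov_commute: "cov n f g = cov n g f"
  by (simp add: cov_def mult.commute)

lemma cov_centered: "cov n f g = (\<Sum>i=1..n. (f i - (\<Sum>j=1..n. f j) / n) * g i)"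
  using sum_centered_mult[of f "{1..n}" g] by (simp add: cov_def)

lemma cov_diff_scaled: "cov n (\<lambda>i. f i - d * h i) g = cov n f g - d * cov n h g"
  by (simp add: cov_def left_diff_distrib sum_subtractf sum_distrib_left[symmetric] algebra_simps
      diff_divide_distrib)

lemma cov_self_pos:
  assumes "increasing_seq n t" "n \<ge> 2"
  shows "cov n t t > 0"
proof -
  define m where "m = (\<Sum>i=1..n. t i) / n"
  have "cov n t t = (\<Sum>i=1..n. (t i - m) * t i) - m * (\<Sum>i=1..n. t i - m)"
    using cov_centered[of n t t] sum_centered[of "{1..n}" t] by (simp add: m_def)
  also have "\<dots> = (\<Sum>i=1..n. (t i - m)^2)"
    by (simp add: power2_eq_square algebra_simps sum_subtractf sum_distrib_left sum.distrib)
  finally have "cov n t t = (\<Sum>i=1..n. (t i - m)^2)" .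
  moreover have "(\<Sum>i\<in>{1,2}. (t i - m)^2) \<le> (\<Sum>i=1..n. (t i - m)^2)"
    by (rule sum_mono2) (use assms(2) in auto)
  moreover have "t 1 < t 2" using assms unfolding increasing_seq_def by simp
  then have "(t 1 - m)^2 > 0 \<or> (t 2 - m)^2 > 0" by auto
  then have "(\<Sum>i\<in>{1,2}. (t i - m)^2) > 0"
    by (auto intro: add_pos_nonneg add_nonneg_pos)
  ultimately show ?thesis by linarith
qed

lemma t_convex_cov_nonneg:
  assumes "n \<ge> 2" "increasing_seq n t" "t_convex n t x" "t_convex n t y" "cov n x t = 0"
  shows "cov n x y \<ge> 0"
proof -
  define x' where "x' i = x i - (\<Sum>j=1..n. x j) / n" for i
  have "t_convex n t x'"
    using t_convex_diff_affine[OF assms(3), of "(\<Sum>j=1..n. x j) / n" 0] by (simp add: x'_def[abs_def])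
  moreover have "(\<Sum>i=1..n. x' i) = 0"
    using sum_centered[of "{1..n}" x] by (simp add: x'_def)
  moreover have "(\<Sum>i=1..n. x' i * g i) = cov n x g" for g
    by (simp add: x'_def cov_centered)
  ultimately show ?thesis
    using t_convex_orthogonal_sum_mult_nonneg[OF assms(1,2) _ assms(4), of x'] assms(5) by simp
qed

lemma t_convex_cov_ge:
  assumes "n \<ge> 2" "increasing_seq n t" "t_convex n t a" "t_convex n t b"
  shows "cov n t a * cov n t b / cov n t t \<le> cov n a b"
proof -
  define \<alpha> where "\<alpha> = cov n t a / cov n t t"
  have "cov n t t > 0" by (rule cov_self_pos[OF assms(2,1)])
  have "t_convex n t (\<lambda>i. a i - \<alpha> * t i)" using t_convex_diff_affine[OF assms(3), of 0 \<alpha>] by simp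
  moreover have "cov n (\<lambda>i. a i - \<alpha> * t i) t = cov n t a - \<alpha> * cov n t t"
    by (simp only: cov_diff_scaled cov_commute[of n a t])
  then have "cov n (\<lambda>i. a i - \<alpha> * t i) t = 0"
    using \<open>cov n t t > 0\<close> by (simp add: \<alpha>_def)
  ultimately have "cov n (\<lambda>i. a i - \<alpha> * t i) b \<ge> 0"
    using t_convex_cov_nonneg[OF assms(1,2) _ assms(4)] by simp
  then show ?thesis unfolding cov_diff_scaled \<alpha>_def by simp
qed

theorem corollary4p2:
  fixes n :: nat and a b t :: "nat \<Rightarrow> real"
  assumes "n \<ge> 2"
    and "t \<in> T_set n a \<inter> T_set n b"
  shows "(\<Sum>i=1..n. a i * b i) - (1 / real n) * (\<Sum>i=1..n. a i) * (\<Sum>i=1..n. b i)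
     \<ge> K_n n t * (\<Sum>i=1..n. (t i - (1 / real n) * (\<Sum>j=1..n. t j)) * a i)
               * (\<Sum>i=1..n. (t i - (1 / real n) * (\<Sum>j=1..n. t j)) * b i)"
proof -
  have "increasing_seq n t" using assms(2) by (simp add: T_set_def)
  then have "cov n t a * cov n t b / cov n t t \<le> cov n a b"
    using t_convex_cov_ge[OF assms(1)] T_set_imp_t_convex assms(2) by simp
  moreover have "K_n n t = inverse (cov n t t)"
    by (simp add: K_n_def cov_def power2_eq_square)
  moreover have "(\<Sum>i=1..n. (t i - (1 / real n) * (\<Sum>j=1..n. t j)) * g i) = cov n t g" for g
    by (simp add: cov_centered)
  ultimately show ?thesis by (simp add: cov_def divide_inverse mult_ac)
qed

end
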